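(* (i) If $\mathscr B$ is not cocanceling, then no bounded $C^2$ domain $\Omega\subset\mathbb R^n$ is strongly $\mathscr B$-pseudoconvex. (ii) If $\mathscr B$ is cocanceling and not elliptic, then every bounded $C^2$ strictly convex domain (all principal curvatures of $\partial\Omega$ positive at every boundary point) is strongly $\mathscr B$-pseudoconvex.
   Context: $E,F$ finite-dimensional real or complex inner product spaces. $\mathscr B=\sum_jB_j\partial_j$ with $B_j\in\mathcal L(F,E)$, symbol $\mathbb B(\xi)=\sum_j\xi_jB_j$. $\mathscr B$ is cocanceling if $\bigcap_{\xi\in S^{n-1}}\ker\mathbb B(\xi)=\{0\}$; $\mathscr B$ is elliptic if $\mathbb B(\xi)$ is injective for all $\xi\ne0$. For a bounded $C^2$ domain with outward unit normal $\nu$ and a $C^1$ extension $N$ of $\nu$ near $\partial\Omega$, $L_B(x):=\sum_{j=1}^n\mathbb B(e_j)^*\mathbb B(\partial_jN(x))$. $\Omega$ is strongly $\mathscr B$-pseudoconvex if for every $x\in\partial\Omega$ the quadratic form $u\mapsto\langle u,L_B(x)u\rangle$ is positive definite on $\ker\mathbb B(\nu(x))$. *)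

theory Defs
  imports "HOL-Analysis.Analysis"
begin

text \<open>Scalars 'k are real or complex; cj is the conjugation (id for real, cnj for complex).
 E = 'k^'e, F = 'k^'f with the standard inner product; operators are matrices.\<close>

definition vinner :: "('k::real_normed_field \<Rightarrow> 'k) \<Rightarrow> 'k^'m::finite \<Rightarrow> 'k^'m \<Rightarrow> 'k" where
  "vinner cj x y = (\<Sum>i\<in>UNIV. cj (x$i) * y$i)"

definition adj :: "('k::real_normed_field \<Rightarrow> 'k) \<Rightarrow> 'k^'a::finite^'b::finite \<Rightarrow> 'k^'b^'a" where
  "adj cj M = (\<chi> i j. cj (M$j$i))"

definition symb :: "('n::finite \<Rightarrow> 'k::real_normed_field^'f::finite^'e::finite) \<Rightarrow> real^'n \<Rightarrow> 'k^'f^'e" where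
  "symb B \<xi> = (\<Sum>j\<in>UNIV. (\<xi>$j) *\<^sub>R B j)"

definition opker :: "'k::real_normed_field^'f::finite^'e::finite \<Rightarrow> ('k^'f) set" where
  "opker M = {u. M *v u = 0}"

definition cocanceling :: "('n::finite \<Rightarrow> 'k::real_normed_field^'f::finite^'e::finite) \<Rightarrow> bool" where
  "cocanceling B \<longleftrightarrow> (\<Inter>\<xi>\<in>sphere 0 1. opker (symb B \<xi>)) = {0}"

definition elliptic :: "('n::finite \<Rightarrow> 'k::real_normed_field^'f::finite^'e::finite) \<Rightarrow> bool" where
  "elliptic B \<longleftrightarrow> (\<forall>\<xi>. \<xi> \<noteq> 0 \<longrightarrow> inj (\<lambda>u. symb B \<xi> *v u))"

definition partial :: "(real^'n::finite \<Rightarrow> 'b::real_normed_vector) \<Rightarrow> 'n \<Rightarrow> real^'n \<Rightarrow> 'b" where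
  "partial f j x = frechet_derivative f (at x) (axis j 1)"

definition C1_on :: "(real^'n::finite) set \<Rightarrow> (real^'n \<Rightarrow> 'b::real_normed_vector) \<Rightarrow> bool" where
  "C1_on U f \<longleftrightarrow> open U \<and> (\<forall>x\<in>U. f differentiable (at x)) \<and>
     (\<forall>j. continuous_on U (partial f j))"

definition C2_on :: "(real^'n::finite) set \<Rightarrow> (real^'n \<Rightarrow> 'b::real_normed_vector) \<Rightarrow> bool" where
  "C2_on U f \<longleftrightarrow> C1_on U f \<and> (\<forall>j. C1_on U (partial f j))"

definition grad :: "(real^'n::finite \<Rightarrow> real) \<Rightarrow> real^'n \<Rightarrow> real^'n" where
  "grad \<rho> x = (\<chi> j. partial \<rho> j x)"

definition local_defining :: "(real^'n::finite) set \<Rightarrow> real^'n \<Rightarrow> real \<Rightarrow> (real^'n \<Rightarrow> real) \<Rightarrow> bool" where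
  "local_defining \<Omega> p r \<rho> \<longleftrightarrow> r > 0 \<and> C2_on (ball p r) \<rho> \<and>
     (\<forall>x\<in>ball p r. grad \<rho> x \<noteq> 0) \<and> \<Omega> \<inter> ball p r = {x\<in>ball p r. \<rho> x < 0}"

definition bounded_C2_domain :: "(real^'n::finite) set \<Rightarrow> bool" where
  "bounded_C2_domain \<Omega> \<longleftrightarrow> open \<Omega> \<and> connected \<Omega> \<and> \<Omega> \<noteq> {} \<and> bounded \<Omega> \<and>
     (\<forall>p\<in>frontier \<Omega>. \<exists>r \<rho>. local_defining \<Omega> p r \<rho>)"

definition outward_unit_normal :: "(real^'n::finite) set \<Rightarrow> (real^'n \<Rightarrow> real^'n) \<Rightarrow> bool" where
  "outward_unit_normal \<Omega> \<nu> \<longleftrightarrow> (\<forall>p\<in>frontier \<Omega>. \<exists>r \<rho>. local_defining \<Omega> p r \<rho> \<and>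
     \<nu> p = (1 / norm (grad \<rho> p)) *\<^sub>R grad \<rho> p)"

definition normal_extension :: "(real^'n::finite) set \<Rightarrow> (real^'n \<Rightarrow> real^'n) \<Rightarrow> (real^'n) set \<Rightarrow> (real^'n \<Rightarrow> real^'n) \<Rightarrow> bool" where
  "normal_extension \<Omega> \<nu> U N \<longleftrightarrow> frontier \<Omega> \<subseteq> U \<and> C1_on U N \<and> (\<forall>x\<in>frontier \<Omega>. N x = \<nu> x)"

text \<open>Strict convexity: at each boundary point, every principal curvature (eigenvalue of the
 shape operator v \<mapsto> D_v \<nu> on the tangent space, \<nu> extended by grad \<rho>/|grad \<rho>|) is positive.\<close>

definition strictly_convex_C2 :: "(real^'n::finite) set \<Rightarrow> bool" where
  "strictly_convex_C2 \<Omega> \<longleftrightarrow> (\<forall>p\<in>frontier \<Omega>. \<exists>r \<rho>. local_defining \<Omega> p r \<rho> \<and>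
     (\<forall>v \<kappa>. v \<noteq> 0 \<and> v \<bullet> grad \<rho> p = 0 \<and>
        frechet_derivative (\<lambda>x. (1 / norm (grad \<rho> x)) *\<^sub>R grad \<rho> x) (at p) v = \<kappa> *\<^sub>R v
        \<longrightarrow> \<kappa> > 0))"

definition L_B :: "('k::real_normed_field \<Rightarrow> 'k) \<Rightarrow> ('n::finite \<Rightarrow> 'k^'f::finite^'e::finite) \<Rightarrow>
    (real^'n \<Rightarrow> real^'n) \<Rightarrow> real^'n \<Rightarrow> 'k^'f^'f" where
  "L_B cj B N x = (\<Sum>j\<in>UNIV. adj cj (symb B (axis j 1)) ** symb B (partial N j x))"

definition strongly_pseudoconvex :: "('k::real_normed_field \<Rightarrow> 'k) \<Rightarrow> ('n::finite \<Rightarrow> 'k^'f::finite^'e::finite) \<Rightarrow>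
    (real^'n) set \<Rightarrow> (real^'n \<Rightarrow> real^'n) \<Rightarrow> (real^'n \<Rightarrow> real^'n) \<Rightarrow> bool" where
  "strongly_pseudoconvex cj B \<Omega> \<nu> N \<longleftrightarrow> (\<forall>x\<in>frontier \<Omega>. \<forall>u. u \<in> opker (symb B (\<nu> x)) \<and> u \<noteq> 0 \<longrightarrow>
     (\<exists>r::real. r > 0 \<and> vinner cj u (L_B cj B N x *v u) = of_real r))"

end

theory Submission
  imports Defs
begin

text \<open>
  (i) If every \<open>B\<^sub>j\<close> annihilates some \<open>u \<noteq> 0\<close>, then so do all symbols \<open>\<B>(\<xi>)\<close> and \<open>L\<^sub>B\<close>,
  so the form \<open>\<langle>u, L\<^sub>B u\<rangle>\<close> vanishes at a nonzero vector of \<open>ker \<B>(\<nu>)\<close>.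

  (ii) Writing \<open>c\<^sub>l = ((B\<^sub>j u)\<^sub>l)\<^sub>j\<close>, the form \<open>\<langle>u, L\<^sub>B u\<rangle>\<close> is \<open>\<Sum>\<^sub>l \<langle>c\<^sub>l, DN c\<^sub>l\<rangle>\<close>, and
  \<open>u \<in> ker \<B>(\<nu>)\<close> means that every \<open>c\<^sub>l\<close> is orthogonal to \<open>\<nu>\<close>, while cocanceling means that some
  \<open>c\<^sub>l \<noteq> 0\<close>. So it suffices that \<open>DN(x)\<close> is symmetric and positive definite on \<open>\<nu>(x)\<^sup>\<bottom>\<close>
  (for complex scalars, apply this to real and imaginary parts). Since \<open>N\<close> and \<open>\<nabla>\<rho>/|\<nabla>\<rho>|\<close>
  agree on the boundary, their derivatives agree in tangent directions; there the latter is
  the shape operator, symmetric by Schwarz's theorem and positive definite because its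
  eigenvalues, the principal curvatures, are positive.
\<close>

section \<open>The symbol and the form \<open>L\<^sub>B\<close>\<close>

lemma symb_mult_vec: "symb B \<xi> *v u = (\<Sum>j\<in>UNIV. \<xi>$j *\<^sub>R (B j *v u))"
proof -
  have "(symb B \<xi> *v u)$i = (\<Sum>l\<in>UNIV. \<Sum>j\<in>UNIV. of_real (\<xi>$j) * B j $ i $ l * u$l)" for i
    unfolding symb_def matrix_vector_mult_def
    by (simp add: sum_component sum_distrib_right del: scaleR_conv_of_real)
      (simp add: scaleR_conv_of_real mult.assoc)
  also have "\<dots> i = (\<Sum>j\<in>UNIV. \<xi>$j *\<^sub>R (B j *v u))$i" for i
    by (subst sum.swap) (simp add: matrix_vector_mult_def sum_component vector_scaleR_component
        del: scaleR_conv_of_real, simp add: scaleR_conv_of_real sum_distrib_left mult.assoc)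
  finally show ?thesis by (simp add: vec_eq_iff)
qed

lemma symb_axis: "symb B (axis j 1) = B j"
proof -
  have "(\<Sum>i\<in>UNIV. axis j (1::real) $ i *\<^sub>R B i) = (\<Sum>i\<in>UNIV. if i = j then B i else 0)"
    by (rule sum.cong) (auto simp: axis_def)
  then show ?thesis unfolding symb_def by simp
qed

lemma matrix_vector_mult_sum_left:
  fixes M :: "'j \<Rightarrow> 'k::comm_ring_1^'f::finite^'e::finite"
  shows "(\<Sum>j\<in>J. M j) *v u = (\<Sum>j\<in>J. M j *v u)"
  by (induction J rule: infinite_finite_induct) (simp_all add: matrix_vector_mult_add_rdistrib)

lemma cocanceling_iff: "cocanceling B \<longleftrightarrow> (\<forall>u. (\<forall>j. B j *v u = 0) \<longrightarrow> u = 0)"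
proof -
  have "u \<in> (\<Inter>\<xi>\<in>sphere 0 1. opker (symb B \<xi>)) \<longleftrightarrow> (\<forall>j. B j *v u = 0)" for u
  proof
    assume "u \<in> (\<Inter>\<xi>\<in>sphere 0 1. opker (symb B \<xi>))"
    then have "u \<in> opker (symb B (axis j 1))" for j
      by simp
    then show "\<forall>j. B j *v u = 0"
      by (simp add: opker_def symb_axis)
  qed (simp add: opker_def symb_mult_vec)
  moreover have "0 \<in> (\<Inter>\<xi>\<in>sphere 0 1. opker (symb B \<xi>))"
    by (simp add: opker_def)
  ultimately show ?thesis
    unfolding cocanceling_def by blast
qed

lemma L_B_mult_vec_eq_0:
  assumes "\<And>j. B j *v u = 0"
  shows "L_B cj B N x *v u = 0"
  unfolding L_B_def matrix_vector_mult_sum_left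
  by (simp add: matrix_vector_mul_assoc[symmetric] symb_mult_vec assms)

lemma not_strongly_pseudoconvex_if_not_cocanceling:
  assumes "\<not> cocanceling B" and "bounded_C2_domain \<Omega>"
  shows "\<not> strongly_pseudoconvex cj B \<Omega> \<nu> N"
proof
  assume sp: "strongly_pseudoconvex cj B \<Omega> \<nu> N"
  obtain u where "u \<noteq> 0" and Bu: "\<And>j. B j *v u = 0"
    using assms(1) by (auto simp: cocanceling_iff)
  have "frontier \<Omega> \<noteq> {}"
    using assms(2) frontier_eq_empty[of \<Omega>] by (auto simp: bounded_C2_domain_def)
  then obtain x where "x \<in> frontier \<Omega>"
    by blast
  moreover have "u \<in> opker (symb B (\<nu> x))"
    by (simp add: opker_def symb_mult_vec Bu)
  ultimately obtain r :: real where "r > 0" "vinner cj u (L_B cj B N x *v u) = of_real r"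
    using sp \<open>u \<noteq> 0\<close> unfolding strongly_pseudoconvex_def by blast
  then show False
    by (simp add: L_B_mult_vec_eq_0 Bu vinner_def)
qed

definition herm_form :: "('k::real_normed_field \<Rightarrow> 'k) \<Rightarrow> ('n::finite \<Rightarrow> real^'n) \<Rightarrow> 'k^'n \<Rightarrow> 'k" where
  "herm_form cj P c = (\<Sum>j\<in>UNIV. \<Sum>k\<in>UNIV. of_real (P j $ k) * cj (c$j) * c$k)"

lemma vinner_adj:
  fixes cj :: "'k::real_normed_field \<Rightarrow> 'k" and M :: "'k^'a::finite^'b::finite"
  assumes add: "\<And>a b. cj (a + b) = cj a + cj b" and mult: "\<And>a b. cj (a * b) = cj a * cj b"
  shows "vinner cj u (adj cj M *v w) = vinner cj (M *v u) w"
proof -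
  have "cj 0 = 0"
    using add[of 0 0] by simp
  then have cj_sum: "cj (\<Sum>i\<in>I. f i) = (\<Sum>i\<in>I. cj (f i))" for I and f :: "'a \<Rightarrow> 'k"
    using sum_comp_morphism[of cj f I, OF _ add] by (simp add: o_def)
  have "vinner cj u (adj cj M *v w) = (\<Sum>i\<in>UNIV. \<Sum>l\<in>UNIV. cj (u$i) * (cj (M$l$i) * w$l))"
    unfolding vinner_def adj_def matrix_vector_mult_def by (simp add: sum_distrib_left)
  also have "\<dots> = (\<Sum>l\<in>UNIV. \<Sum>i\<in>UNIV. cj (u$i) * (cj (M$l$i) * w$l))"
    by (rule sum.swap)
  also have "\<dots> = vinner cj (M *v u) w"
    unfolding vinner_def matrix_vector_mult_def
    by (simp add: cj_sum mult sum_distrib_left sum_distrib_right mult_ac)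
  finally show ?thesis .
qed

lemma vinner_sum_right: "vinner cj u (\<Sum>j\<in>J. f j) = (\<Sum>j\<in>J. vinner cj u (f j))"
  unfolding vinner_def by (simp add: sum_component sum_distrib_left sum.swap[of _ UNIV J])

lemma vinner_scaleR_right:
  fixes u :: "'k::real_normed_field^'m::finite"
  shows "vinner cj u (r *\<^sub>R w) = of_real r * vinner cj u w"
  unfolding vinner_def
  by (simp add: vector_scaleR_component sum_distrib_left del: scaleR_conv_of_real)
    (simp add: scaleR_conv_of_real mult_ac)

lemma vinner_L_B:
  fixes cj :: "'k::real_normed_field \<Rightarrow> 'k" and B :: "'n::finite \<Rightarrow> 'k^'f::finite^'e::finite"
  assumes add: "\<And>a b. cj (a + b) = cj a + cj b" and mult: "\<And>a b. cj (a * b) = cj a * cj b"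
  shows "vinner cj u (L_B cj B N x *v u) =
    (\<Sum>l\<in>UNIV. herm_form cj (\<lambda>j. partial N j x) (\<chi> j. (B j *v u)$l))"
proof -
  have "vinner cj u (L_B cj B N x *v u) =
      (\<Sum>j\<in>UNIV. vinner cj (B j *v u) (symb B (partial N j x) *v u))"
    unfolding L_B_def matrix_vector_mult_sum_left vinner_sum_right
    by (simp add: matrix_vector_mul_assoc[symmetric] vinner_adj[OF add mult] symb_axis)
  also have "\<dots> = (\<Sum>j\<in>UNIV. \<Sum>l\<in>UNIV. \<Sum>k\<in>UNIV.
      of_real (partial N j x $ k) * cj ((B j *v u)$l) * (B k *v u)$l)"
    by (simp add: symb_mult_vec vinner_sum_right vinner_scaleR_right vinner_def sum_distrib_left
        sum_distrib_right mult_ac) (simp add: scaleR_conv_of_real mult_ac)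
  also have "\<dots> = (\<Sum>l\<in>UNIV. \<Sum>j\<in>UNIV. \<Sum>k\<in>UNIV.
      of_real (partial N j x $ k) * cj ((B j *v u)$l) * (B k *v u)$l)"
    by (rule sum.swap)
  finally show ?thesis
    by (simp add: herm_form_def)
qed

lemma symb_kernel_row:
  assumes "u \<in> opker (symb B n)"
  shows "(\<Sum>j\<in>UNIV. of_real (n$j) * (B j *v u)$l) = 0"
proof -
  have "(symb B n *v u)$l = 0"
    using assms by (simp add: opker_def)
  then have "(\<Sum>j\<in>UNIV. n$j *\<^sub>R (B j *v u)$l) = 0"
    by (simp add: symb_mult_vec sum_component vector_scaleR_component del: scaleR_conv_of_real)
  then show ?thesis
    by (simp add: scaleR_conv_of_real)
qed

lemma vinner_L_B_pos:
  fixes B :: "'n::finite \<Rightarrow> 'k::real_normed_field^'f::finite^'e::finite" and q :: "'k^'n \<Rightarrow> real"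
  assumes add: "\<And>a b. cj (a + b) = cj a + cj b" and mult: "\<And>a b. cj (a * b) = cj a * cj b"
    and form: "\<And>c. (\<Sum>j\<in>UNIV. of_real (n$j) * c$j) = 0 \<Longrightarrow>
        herm_form cj (\<lambda>j. partial N j x) c = of_real (q c)"
    and pos: "\<And>c. (\<Sum>j\<in>UNIV. of_real (n$j) * c$j) = 0 \<Longrightarrow> c \<noteq> 0 \<Longrightarrow> q c > 0"
    and "cocanceling B" and u: "u \<in> opker (symb B n)" "u \<noteq> 0"
  shows "\<exists>r>0. vinner cj u (L_B cj B N x *v u) = of_real r"
proof -
  define c where "c l = (\<chi> j. (B j *v u)$l)" for l
  have tangent: "(\<Sum>j\<in>UNIV. of_real (n$j) * c l $ j) = 0" for l
    using symb_kernel_row[OF u(1)] by (simp add: c_def)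
  have "of_real (q 0) = (0::'k)"
    using form[of 0] by (simp add: herm_form_def)
  then have nonneg: "q (c l) \<ge> 0" for l
    using pos[OF tangent, of l] by (cases "c l = 0") auto
  obtain j where "B j *v u \<noteq> 0"
    using \<open>cocanceling B\<close> u(2) unfolding cocanceling_iff by blast
  then obtain l where "(B j *v u)$l \<noteq> 0"
    by (auto simp: vec_eq_iff)
  then have "c l \<noteq> 0"
    by (auto simp: c_def vec_eq_iff)
  then have "(\<Sum>l\<in>UNIV. q (c l)) > 0"
    using pos[OF tangent] nonneg by (intro sum_pos2[of UNIV l]) auto
  moreover have "vinner cj u (L_B cj B N x *v u) = of_real (\<Sum>l\<in>UNIV. q (c l))"
    by (simp add: vinner_L_B[OF add mult] form[OF tangent, unfolded c_def] c_def)
  ultimately show ?thesis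
    by blast
qed

definition pos_def_on_orth :: "(real^'n::finite \<Rightarrow> real^'n) \<Rightarrow> real^'n \<Rightarrow> bool" where
  "pos_def_on_orth A n \<longleftrightarrow> linear A \<and>
     (\<forall>a b. a \<bullet> n = 0 \<longrightarrow> b \<bullet> n = 0 \<longrightarrow> a \<bullet> A b = b \<bullet> A a) \<and>
     (\<forall>a. a \<bullet> n = 0 \<longrightarrow> a \<noteq> 0 \<longrightarrow> 0 < a \<bullet> A a)"

lemma linear_eq_sum_axis:
  fixes A :: "real^'n::finite \<Rightarrow> 'b::real_vector"
  assumes "linear A"
  shows "A p = (\<Sum>j\<in>UNIV. p$j *\<^sub>R A (axis j 1))"
proof -
  have "A p = A (\<Sum>j\<in>UNIV. p$j *\<^sub>R axis j 1)"
    using basis_expansion[of p] by (simp add: scalar_mult_eq_scaleR)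
  also have "\<dots> = (\<Sum>j\<in>UNIV. p$j *\<^sub>R A (axis j 1))"
    using assms by (simp add: linear_sum linear_scale)
  finally show ?thesis .
qed

lemma inner_linear_eq_sum_axis:
  fixes A :: "real^'n::finite \<Rightarrow> real^'n"
  assumes "linear A"
  shows "q \<bullet> A p = (\<Sum>j\<in>UNIV. \<Sum>k\<in>UNIV. A (axis j 1) $ k * p$j * q$k)"
proof -
  have "q \<bullet> A p = (\<Sum>k\<in>UNIV. \<Sum>j\<in>UNIV. A (axis j 1) $ k * p$j * q$k)"
    by (subst linear_eq_sum_axis[OF assms])
      (simp add: inner_vec_def sum_component sum_distrib_left mult_ac)
  also have "\<dots> = (\<Sum>j\<in>UNIV. \<Sum>k\<in>UNIV. A (axis j 1) $ k * p$j * q$k)"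
    by (rule sum.swap)
  finally show ?thesis .
qed

lemma herm_form_real:
  assumes "linear A"
  shows "herm_form (\<lambda>x. x) (\<lambda>j. A (axis j 1)) c = c \<bullet> A c"
  by (simp add: herm_form_def inner_linear_eq_sum_axis[OF assms])

lemma herm_form_complex:
  fixes c :: "complex^'n::finite"
  assumes lin: "linear A"
  defines "a \<equiv> \<chi> j. Re (c$j)" and "b \<equiv> \<chi> j. Im (c$j)"
  shows "herm_form cnj (\<lambda>j. A (axis j 1)) c =
    of_real (a \<bullet> A a + b \<bullet> A b) + \<i> * of_real (b \<bullet> A a - a \<bullet> A b)"
proof -
  define m where "m j k = A (axis j 1) $ k" for j k
  have "of_real r * cnj z * w =
      of_real (r * (Re z * Re w + Im z * Im w)) + \<i> * of_real (r * (Re z * Im w - Im z * Re w))"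
    for r z w
    by (simp add: complex_eq_iff algebra_simps)
  then have "herm_form cnj (\<lambda>j. A (axis j 1)) c =
      of_real (\<Sum>j\<in>UNIV. \<Sum>k\<in>UNIV. m j k * (a$j * a$k + b$j * b$k)) +
      \<i> * of_real (\<Sum>j\<in>UNIV. \<Sum>k\<in>UNIV. m j k * (a$j * b$k - b$j * a$k))"
    by (simp add: herm_form_def m_def a_def b_def sum.distrib sum_distrib_left)
  also have "(\<Sum>j\<in>UNIV. \<Sum>k\<in>UNIV. m j k * (a$j * a$k + b$j * b$k)) = a \<bullet> A a + b \<bullet> A b"
    by (simp add: inner_linear_eq_sum_axis[OF lin] m_def sum.distrib algebra_simps)
  also have "(\<Sum>j\<in>UNIV. \<Sum>k\<in>UNIV. m j k * (a$j * b$k - b$j * a$k)) = b \<bullet> A a - a \<bullet> A b"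
    by (simp add: inner_linear_eq_sum_axis[OF lin] m_def sum_subtractf algebra_simps)
  finally show ?thesis .
qed

lemma strongly_pseudoconvex_real:
  fixes B :: "'n::finite \<Rightarrow> real^'f::finite^'e::finite"
  assumes "cocanceling B"
    and pos_def: "\<And>x. x \<in> frontier \<Omega> \<Longrightarrow> pos_def_on_orth (frechet_derivative N (at x)) (\<nu> x)"
  shows "strongly_pseudoconvex (\<lambda>x. x) B \<Omega> \<nu> N"
  unfolding strongly_pseudoconvex_def
proof (intro ballI allI impI)
  fix x u
  assume "x \<in> frontier \<Omega>" and u: "u \<in> opker (symb B (\<nu> x)) \<and> u \<noteq> 0"
  define A where "A = frechet_derivative N (at x)"
  have A: "pos_def_on_orth A (\<nu> x)"
    using pos_def \<open>x \<in> frontier \<Omega>\<close> by (simp add: A_def)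
  have tangent: "c \<bullet> \<nu> x = 0" if "(\<Sum>j\<in>UNIV. of_real (\<nu> x $ j) * c$j) = 0" for c :: "real^'n"
    using that by (simp add: inner_vec_def mult.commute)
  show "\<exists>r>0. vinner (\<lambda>x. x) u (L_B (\<lambda>x. x) B N x *v u) = of_real r"
  proof (rule vinner_L_B_pos[where q = "\<lambda>c. c \<bullet> A c"])
    show "herm_form (\<lambda>x. x) (\<lambda>j. partial N j x) c = of_real (c \<bullet> A c)" for c
      using A by (simp add: partial_def A_def[symmetric] herm_form_real pos_def_on_orth_def)
    show "c \<bullet> A c > 0" if "(\<Sum>j\<in>UNIV. of_real (\<nu> x $ j) * c$j) = 0" "c \<noteq> 0" for c
      using A tangent[OF that(1)] that(2) by (simp add: pos_def_on_orth_def)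
  qed (use assms(1) u in simp_all)
qed

lemma strongly_pseudoconvex_complex:
  fixes B :: "'n::finite \<Rightarrow> complex^'f::finite^'e::finite"
  assumes "cocanceling B"
    and pos_def: "\<And>x. x \<in> frontier \<Omega> \<Longrightarrow> pos_def_on_orth (frechet_derivative N (at x)) (\<nu> x)"
  shows "strongly_pseudoconvex cnj B \<Omega> \<nu> N"
  unfolding strongly_pseudoconvex_def
proof (intro ballI allI impI)
  fix x u
  assume "x \<in> frontier \<Omega>" and u: "u \<in> opker (symb B (\<nu> x)) \<and> u \<noteq> 0"
  define A where "A = frechet_derivative N (at x)"
  have A: "pos_def_on_orth A (\<nu> x)"
    using pos_def \<open>x \<in> frontier \<Omega>\<close> by (simp add: A_def)
  define re im where "re c = (\<chi> j. Re (c$j))" and "im c = (\<chi> j. Im (c$j))" for c :: "complex^'n"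
  have tangent: "re c \<bullet> \<nu> x = 0 \<and> im c \<bullet> \<nu> x = 0"
    if "(\<Sum>j\<in>UNIV. of_real (\<nu> x $ j) * c$j) = 0" for c
  proof -
    have "Re (\<Sum>j\<in>UNIV. of_real (\<nu> x $ j) * c$j) = 0" "Im (\<Sum>j\<in>UNIV. of_real (\<nu> x $ j) * c$j) = 0"
      using that by simp_all
    then show ?thesis
      by (simp add: re_def im_def inner_vec_def mult.commute)
  qed
  show "\<exists>r>0. vinner cnj u (L_B cnj B N x *v u) = of_real r"
  proof (rule vinner_L_B_pos[where q = "\<lambda>c. re c \<bullet> A (re c) + im c \<bullet> A (im c)"])
    fix c :: "complex^'n"
    assume "(\<Sum>j\<in>UNIV. of_real (\<nu> x $ j) * c$j) = 0"
    then have "re c \<bullet> \<nu> x = 0" "im c \<bullet> \<nu> x = 0"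
      using tangent by blast+
    then have "im c \<bullet> A (re c) = re c \<bullet> A (im c)"
      using A by (simp add: pos_def_on_orth_def)
    then show "herm_form cnj (\<lambda>j. partial N j x) c = of_real (re c \<bullet> A (re c) + im c \<bullet> A (im c))"
      using A by (simp add: partial_def A_def[symmetric] herm_form_complex re_def im_def pos_def_on_orth_def)
  next
    fix c :: "complex^'n"
    assume "(\<Sum>j\<in>UNIV. of_real (\<nu> x $ j) * c$j) = 0" and "c \<noteq> 0"
    then have "re c \<bullet> \<nu> x = 0" "im c \<bullet> \<nu> x = 0"
      using tangent by blast+
    moreover have "re c \<noteq> 0 \<or> im c \<noteq> 0"
      using \<open>c \<noteq> 0\<close> by (auto simp: re_def im_def vec_eq_iff complex_eq_iff)
    moreover have "0 \<le> a \<bullet> A a" if "a \<bullet> \<nu> x = 0" for a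
      using A that unfolding pos_def_on_orth_def by (metis inner_zero_left linear_0 less_eq_real_def)
    ultimately show "re c \<bullet> A (re c) + im c \<bullet> A (im c) > 0"
      using A unfolding pos_def_on_orth_def by (smt (verit))
  qed (use assms(1) u in simp_all)
qed

section \<open>Calculus in coordinates\<close>

lemma has_derivative_partial_sum:
  fixes f :: "real^'n::finite \<Rightarrow> 'b::real_normed_vector"
  assumes "f differentiable (at y)"
  shows "(f has_derivative (\<lambda>v. \<Sum>j\<in>UNIV. v$j *\<^sub>R partial f j y)) (at y)"
proof -
  have "frechet_derivative f (at y) = (\<lambda>v. \<Sum>j\<in>UNIV. v$j *\<^sub>R partial f j y)"
    unfolding partial_def by (rule ext, rule linear_eq_sum_axis[OF linear_frechet_derivative[OF assms]])
  then show ?thesis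
    using assms frechet_derivative_works by metis
qed

lemma has_derivative_grad:
  fixes \<rho> :: "real^'n::finite \<Rightarrow> real"
  assumes "\<rho> differentiable (at y)"
  shows "(\<rho> has_derivative (\<lambda>v. grad \<rho> y \<bullet> v)) (at y)"
  using has_derivative_partial_sum[OF assms] by (simp add: grad_def inner_vec_def mult.commute)

lemma has_derivative_vec_componentwise:
  fixes f :: "'a::real_normed_vector \<Rightarrow> real^'n::finite"
  assumes "\<And>k. ((\<lambda>y. f y $ k) has_derivative (\<lambda>v. f' v $ k)) (at x)"
  shows "(f has_derivative f') (at x)"
proof (rule has_derivative_componentwise_within[THEN iffD2], rule ballI)
  fix i :: "real^'n"
  assume "i \<in> Basis"
  then obtain k u where "i = axis k u" "u \<in> (Basis :: real set)"
    unfolding Basis_vec_def by blast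
  then have i: "i = axis k 1"
    by simp
  show "((\<lambda>y. f y \<bullet> i) has_derivative (\<lambda>v. f' v \<bullet> i)) (at x)"
    unfolding i cart_eq_inner_axis[symmetric] by (rule assms)
qed

lemma has_real_derivative_along_line:
  fixes f :: "'a::real_normed_vector \<Rightarrow> real"
  assumes "(f has_derivative f') (at (c + t *\<^sub>R v))"
  shows "((\<lambda>s. f (c + s *\<^sub>R v)) has_real_derivative f' v) (at t)"
proof -
  have "((\<lambda>s. c + s *\<^sub>R v) has_derivative (\<lambda>h. h *\<^sub>R v)) (at t)"
    by (auto intro!: derivative_eq_intros)
  from has_derivative_compose[OF this assms]
  show ?thesis
    by (rule has_derivative_imp_has_field_derivative)
      (simp add: linear_scale[OF has_derivative_linear[OF assms]])
qed

definition hessian :: "(real^'n::finite \<Rightarrow> real) \<Rightarrow> real^'n \<Rightarrow> real^'n^'n" where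
  "hessian \<rho> y = (\<chi> k i. partial (partial \<rho> k) i y)"

lemma C2_on_has_derivative_grad:
  assumes "C2_on S \<rho>" "y \<in> S"
  shows "(grad \<rho> has_derivative (\<lambda>v. hessian \<rho> y *v v)) (at y)"
proof (rule has_derivative_vec_componentwise)
  fix k
  have "partial \<rho> k differentiable (at y)"
    using assms unfolding C2_on_def C1_on_def by blast
  from has_derivative_partial_sum[OF this]
  show "((\<lambda>z. grad \<rho> z $ k) has_derivative (\<lambda>v. (hessian \<rho> y *v v) $ k)) (at y)"
    by (simp add: grad_def hessian_def matrix_vector_mult_def mult.commute)
qed

lemma C2_on_has_derivative_inner_grad:
  assumes "C2_on S \<rho>" "y \<in> S"
  shows "((\<lambda>z. b \<bullet> grad \<rho> z) has_derivative (\<lambda>v. b \<bullet> (hessian \<rho> y *v v))) (at y)"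
  using C2_on_has_derivative_grad[OF assms] by (auto intro!: derivative_eq_intros)

lemma C2_on_continuous_on_hessian:
  assumes "C2_on S \<rho>"
  shows "continuous_on S (\<lambda>y. b \<bullet> (hessian \<rho> y *v a))"
proof -
  have "continuous_on S (partial (partial \<rho> k) i)" for i k
    using assms unfolding C2_on_def C1_on_def by blast
  then show ?thesis
    unfolding hessian_def inner_vec_def matrix_vector_mult_def by (intro continuous_intros) auto
qed

lemma second_difference_mvt:
  fixes \<rho> :: "real^'n::finite \<Rightarrow> real"
  assumes C2: "C2_on (ball x r) \<rho>" and "s > 0" and "s * (norm a + norm b) < r"
  shows "\<exists>y\<in>ball x r. \<rho> (x + s *\<^sub>R a + s *\<^sub>R b) - \<rho> (x + s *\<^sub>R a) - \<rho> (x + s *\<^sub>R b) + \<rho> x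
           = s * s * (b \<bullet> (hessian \<rho> y *v a))"
proof -
  have inb: "x + \<sigma> *\<^sub>R a + \<tau> *\<^sub>R b \<in> ball x r"
    if "0 \<le> \<sigma>" "\<sigma> \<le> s" "0 \<le> \<tau>" "\<tau> \<le> s" for \<sigma> \<tau>
  proof -
    have "norm (\<sigma> *\<^sub>R a + \<tau> *\<^sub>R b) \<le> \<sigma> * norm a + \<tau> * norm b"
      using that by (metis abs_of_nonneg norm_scaleR norm_triangle_ineq)
    also have "\<dots> \<le> s * (norm a + norm b)"
      using that by (simp add: distrib_left add_mono mult_right_mono)
    finally have "norm (\<sigma> *\<^sub>R a + \<tau> *\<^sub>R b) < r"
      using assms(3) by linarith
    then show ?thesis
      by (simp add: dist_norm add.assoc norm_minus_commute add.commute)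
  qed
  have grad_deriv: "(\<rho> has_derivative (\<lambda>v. grad \<rho> y \<bullet> v)) (at y)" if "y \<in> ball x r" for y
    using C2 that unfolding C2_on_def C1_on_def by (blast intro: has_derivative_grad)
  define \<phi> where "\<phi> t = \<rho> (x + s *\<^sub>R a + t *\<^sub>R b) - \<rho> (x + t *\<^sub>R b)" for t
  have "DERIV \<phi> t :> grad \<rho> (x + s *\<^sub>R a + t *\<^sub>R b) \<bullet> b - grad \<rho> (x + t *\<^sub>R b) \<bullet> b"
    if "0 \<le> t" "t \<le> s" for t
    unfolding \<phi>_def using inb[of s t] inb[of 0 t] that \<open>s > 0\<close>
    by (intro DERIV_diff has_real_derivative_along_line grad_deriv) simp_all
  from MVT2[OF \<open>s > 0\<close> this] obtain \<tau> where \<tau>: "0 < \<tau>" "\<tau> < s"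
    "\<phi> s - \<phi> 0 = s * (grad \<rho> (x + s *\<^sub>R a + \<tau> *\<^sub>R b) \<bullet> b - grad \<rho> (x + \<tau> *\<^sub>R b) \<bullet> b)"
    by auto
  define \<psi> where "\<psi> \<sigma> = b \<bullet> grad \<rho> (x + \<tau> *\<^sub>R b + \<sigma> *\<^sub>R a)" for \<sigma>
  have "DERIV \<psi> \<sigma> :> b \<bullet> (hessian \<rho> (x + \<tau> *\<^sub>R b + \<sigma> *\<^sub>R a) *v a)"
    if "0 \<le> \<sigma>" "\<sigma> \<le> s" for \<sigma>
    unfolding \<psi>_def using inb[of \<sigma> \<tau>] that \<tau>
    by (intro has_real_derivative_along_line C2_on_has_derivative_inner_grad[OF C2])
      (simp add: algebra_simps)
  from MVT2[OF \<open>s > 0\<close> this] obtain \<sigma> where \<sigma>: "0 < \<sigma>" "\<sigma> < s"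
    "\<psi> s - \<psi> 0 = s * (b \<bullet> (hessian \<rho> (x + \<tau> *\<^sub>R b + \<sigma> *\<^sub>R a) *v a))"
    by auto
  have "x + \<tau> *\<^sub>R b + \<sigma> *\<^sub>R a \<in> ball x r"
    using inb[of \<sigma> \<tau>] \<sigma> \<tau> by (simp add: algebra_simps)
  moreover have "\<rho> (x + s *\<^sub>R a + s *\<^sub>R b) - \<rho> (x + s *\<^sub>R a) - \<rho> (x + s *\<^sub>R b) + \<rho> x = s * (\<psi> s - \<psi> 0)"
    using \<tau>(3) by (simp add: \<phi>_def \<psi>_def inner_commute algebra_simps)
  ultimately show ?thesis
    using \<sigma>(3) by auto
qed

lemma C2_on_subset: "C2_on S f \<Longrightarrow> open T \<Longrightarrow> T \<subseteq> S \<Longrightarrow> C2_on T f"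
  unfolding C2_on_def C1_on_def by (blast intro: continuous_on_subset)

lemma hessian_forms_agree_nearby:
  fixes \<rho> :: "real^'n::finite \<Rightarrow> real"
  assumes C2: "C2_on (ball x r) \<rho>" and "0 < m" and "m \<le> r"
  shows "\<exists>y1\<in>ball x m. \<exists>y2\<in>ball x m. b \<bullet> (hessian \<rho> y1 *v a) = a \<bullet> (hessian \<rho> y2 *v b)"
proof -
  define s where "s = (m / 2) / (norm a + norm b + 1)"
  have "norm a + norm b + 1 > 0"
    by (simp add: add_nonneg_pos)
  then have "s > 0" and "s * (norm a + norm b + 1) = m / 2"
    using \<open>0 < m\<close> unfolding s_def by (simp_all add: field_simps)
  then have ab: "s * (norm a + norm b) < m" and ba: "s * (norm b + norm a) < m"
    using \<open>0 < m\<close> by (simp_all add: algebra_simps)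
  have C2m: "C2_on (ball x m) \<rho>"
    by (rule C2_on_subset[OF C2]) (use \<open>m \<le> r\<close> in auto)
  obtain y1 where "y1 \<in> ball x m" and "\<rho> (x + s *\<^sub>R a + s *\<^sub>R b) - \<rho> (x + s *\<^sub>R a) - \<rho> (x + s *\<^sub>R b) + \<rho> x
      = s * s * (b \<bullet> (hessian \<rho> y1 *v a))"
    using second_difference_mvt[OF C2m \<open>s > 0\<close> ab] by blast
  moreover obtain y2 where "y2 \<in> ball x m" and "\<rho> (x + s *\<^sub>R b + s *\<^sub>R a) - \<rho> (x + s *\<^sub>R b) - \<rho> (x + s *\<^sub>R a) + \<rho> x
      = s * s * (a \<bullet> (hessian \<rho> y2 *v b))"
    using second_difference_mvt[OF C2m \<open>s > 0\<close> ba] by blast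
  moreover have "x + s *\<^sub>R b + s *\<^sub>R a = x + s *\<^sub>R a + s *\<^sub>R b"
    by (simp add: algebra_simps)
  ultimately have "s * s * (b \<bullet> (hessian \<rho> y1 *v a)) = s * s * (a \<bullet> (hessian \<rho> y2 *v b))"
    by (simp only:)
  then have "b \<bullet> (hessian \<rho> y1 *v a) = a \<bullet> (hessian \<rho> y2 *v b)"
    using \<open>s > 0\<close> by simp
  then show ?thesis
    using \<open>y1 \<in> ball x m\<close> \<open>y2 \<in> ball x m\<close> by blast
qed

lemma hessian_symmetric:
  fixes \<rho> :: "real^'n::finite \<Rightarrow> real"
  assumes C2: "C2_on (ball x r) \<rho>" and "r > 0"
  shows "a \<bullet> (hessian \<rho> x *v b) = b \<bullet> (hessian \<rho> x *v a)"
proof (rule ccontr)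
  define h1 h2 where "h1 y = b \<bullet> (hessian \<rho> y *v a)" and "h2 y = a \<bullet> (hessian \<rho> y *v b)" for y
  define \<epsilon> where "\<epsilon> = \<bar>h2 x - h1 x\<bar> / 2"
  assume "a \<bullet> (hessian \<rho> x *v b) \<noteq> b \<bullet> (hessian \<rho> x *v a)"
  then have "\<epsilon> > 0"
    by (simp add: \<epsilon>_def h1_def h2_def)
  moreover have "isCont h1 x" "isCont h2 x"
    unfolding h1_def h2_def using \<open>r > 0\<close>
    by (auto intro!: continuous_on_interior[OF C2_on_continuous_on_hessian[OF C2]])
  ultimately obtain d1 d2 where "d1 > 0" and d1: "\<forall>y. dist y x < d1 \<longrightarrow> dist (h1 y) (h1 x) < \<epsilon>"
    and "d2 > 0" and d2: "\<forall>y. dist y x < d2 \<longrightarrow> dist (h2 y) (h2 x) < \<epsilon>"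
    unfolding continuous_at_eps_delta by blast
  define m where "m = min r (min d1 d2)"
  have "0 < m" "m \<le> r"
    using \<open>r > 0\<close> \<open>d1 > 0\<close> \<open>d2 > 0\<close> by (simp_all add: m_def)
  from hessian_forms_agree_nearby[OF C2 this] obtain y1 y2
    where "y1 \<in> ball x m" "y2 \<in> ball x m" "h1 y1 = h2 y2"
    unfolding h1_def h2_def by blast
  then have "dist y1 x < d1" "dist y2 x < d2"
    by (simp_all add: m_def dist_commute)
  then have "\<bar>h1 y1 - h1 x\<bar> < \<epsilon>" "\<bar>h2 x - h2 y2\<bar> < \<epsilon>"
    using d1 d2 unfolding dist_real_def by (auto simp: abs_minus_commute)
  moreover have "\<bar>h2 x - h1 x\<bar> \<le> \<bar>h1 y1 - h1 x\<bar> + \<bar>h2 x - h2 y2\<bar>"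
    using abs_triangle_ineq[of "h2 x - h2 y2" "h1 y1 - h1 x"] \<open>h1 y1 = h2 y2\<close> by simp
  ultimately show False
    by (simp add: \<epsilon>_def)
qed

section \<open>Symmetric operators on a hyperplane\<close>

lemma quadratic_nonneg_imp_linear_coeff_zero:
  fixes \<alpha> \<beta> :: real
  assumes "\<And>t. 0 \<le> 2 * t * \<alpha> + t * t * \<beta>"
  shows "\<alpha> = 0"
proof -
  define c where "c = \<bar>\<beta>\<bar> + 1"
  have "c > 0" "\<beta> \<le> c"
    by (simp_all add: c_def)
  have "0 \<le> c * c * (2 * (- \<alpha> / c) * \<alpha> + (- \<alpha> / c) * (- \<alpha> / c) * \<beta>)"
    using assms[of "- \<alpha> / c"] \<open>c > 0\<close> by simp
  also have "\<dots> = - 2 * \<alpha> * \<alpha> * c + \<alpha> * \<alpha> * \<beta>"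
    using \<open>c > 0\<close> by (simp add: field_simps)
  also have "\<dots> \<le> - (\<alpha> * \<alpha>) * c"
    using mult_left_mono[OF \<open>\<beta> \<le> c\<close>, of "\<alpha> * \<alpha>"] by simp
  finally have "\<alpha> * \<alpha> \<le> 0"
    using \<open>c > 0\<close> by (simp add: mult_le_0_iff)
  then show ?thesis
    by (simp add: mult_le_0_iff) linarith
qed

lemma rayleigh_minimizer_eigenvector:
  fixes S :: "real^'n::finite \<Rightarrow> real^'n"
  assumes lin: "linear S" and tan: "\<And>v. v \<bullet> g = 0 \<Longrightarrow> S v \<bullet> g = 0"
    and sym: "\<And>a b. a \<bullet> g = 0 \<Longrightarrow> b \<bullet> g = 0 \<Longrightarrow> a \<bullet> S b = b \<bullet> S a"
    and wg: "w \<bullet> g = 0" and ww: "w \<bullet> w = 1"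
    and lower: "\<And>u. u \<bullet> g = 0 \<Longrightarrow> (w \<bullet> S w) * (u \<bullet> u) \<le> u \<bullet> S u"
  shows "S w = (w \<bullet> S w) *\<^sub>R w"
proof -
  define m where "m = w \<bullet> S w"
  have orth: "z \<bullet> S w - m * (z \<bullet> w) = 0" if "z \<bullet> g = 0" for z
  proof (rule quadratic_nonneg_imp_linear_coeff_zero)
    fix t :: real
    have "(w + t *\<^sub>R z) \<bullet> g = 0"
      using wg that by (simp add: inner_add_left)
    from lower[OF this]
    show "0 \<le> 2 * t * (z \<bullet> S w - m * (z \<bullet> w)) + t * t * (z \<bullet> S z - m * (z \<bullet> z))"
      using sym[OF wg that] ww
      by (simp add: linear_add[OF lin] linear_scale[OF lin] inner_add_left inner_add_right
          inner_commute m_def algebra_simps)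
  qed
  have "(S w - m *\<^sub>R w) \<bullet> g = 0"
    using tan[OF wg] wg by (simp add: inner_diff_left)
  from orth[OF this] have "(S w - m *\<^sub>R w) \<bullet> (S w - m *\<^sub>R w) = 0"
    by (simp add: inner_diff_right inner_diff_left inner_commute algebra_simps)
  then show ?thesis
    by (simp add: m_def)
qed

lemma rayleigh_minimizer_exists:
  fixes S :: "real^'n::finite \<Rightarrow> real^'n"
  assumes lin: "linear S" and "a \<bullet> g = 0" and "a \<noteq> 0"
  obtains w where "w \<bullet> g = 0" and "w \<bullet> w = 1"
    and "\<And>u. u \<bullet> g = 0 \<Longrightarrow> (w \<bullet> S w) * (u \<bullet> u) \<le> u \<bullet> S u"
proof -
  define K where "K = {v. g \<bullet> v = 0} \<inter> sphere 0 1"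
  have unit: "(1 / norm u) *\<^sub>R u \<in> K" if "u \<bullet> g = 0" "u \<noteq> 0" for u
    using that by (simp add: K_def inner_commute)
  have "compact K"
    unfolding K_def by (intro closed_Int_compact closed_hyperplane compact_sphere)
  moreover have "K \<noteq> {}"
    using unit[OF assms(2,3)] by blast
  moreover have "bounded_linear S"
    using lin by (simp add: linear_conv_bounded_linear)
  then have "continuous_on K (\<lambda>v. v \<bullet> S v)"
    by (intro continuous_on_inner continuous_on_id linear_continuous_on)
  ultimately obtain w where "w \<in> K" and wmin: "\<And>y. y \<in> K \<Longrightarrow> w \<bullet> S w \<le> y \<bullet> S y"
    by (metis continuous_attains_inf)
  have "(w \<bullet> S w) * (u \<bullet> u) \<le> u \<bullet> S u" if "u \<bullet> g = 0" for u
  proof (cases "u = 0")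
    case False
    have "(1 / norm u) *\<^sub>R u \<bullet> S ((1 / norm u) *\<^sub>R u) = (u \<bullet> S u) / (norm u)\<^sup>2"
      by (simp add: linear_scale[OF lin] power2_eq_square)
    then have "(w \<bullet> S w) * (norm u)\<^sup>2 \<le> u \<bullet> S u"
      using wmin[OF unit[OF that False]] False by (simp add: pos_le_divide_eq)
    then show ?thesis
      by (simp add: power2_norm_eq_inner)
  qed (simp add: linear_0[OF lin])
  moreover have "w \<bullet> g = 0" "w \<bullet> w = 1"
    using \<open>w \<in> K\<close> by (auto simp: K_def inner_commute norm_eq_sqrt_inner)
  ultimately show ?thesis
    using that by blast
qed

lemma pos_def_on_orth_if_eigenvalues_pos:
  fixes S :: "real^'n::finite \<Rightarrow> real^'n"
  assumes lin: "linear S" and tan: "\<And>v. v \<bullet> g = 0 \<Longrightarrow> S v \<bullet> g = 0"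
    and sym: "\<And>a b. a \<bullet> g = 0 \<Longrightarrow> b \<bullet> g = 0 \<Longrightarrow> a \<bullet> S b = b \<bullet> S a"
    and eig: "\<And>v \<kappa>. v \<noteq> 0 \<Longrightarrow> v \<bullet> g = 0 \<Longrightarrow> S v = \<kappa> *\<^sub>R v \<Longrightarrow> \<kappa> > 0"
  shows "pos_def_on_orth S g"
proof -
  have "0 < a \<bullet> S a" if a: "a \<bullet> g = 0" "a \<noteq> 0" for a
  proof -
    obtain w where wg: "w \<bullet> g = 0" and ww: "w \<bullet> w = 1"
      and lower: "\<And>u. u \<bullet> g = 0 \<Longrightarrow> (w \<bullet> S w) * (u \<bullet> u) \<le> u \<bullet> S u"
      using rayleigh_minimizer_exists[OF lin a] by blast
    have "w \<noteq> 0"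
      using ww by auto
    then have "w \<bullet> S w > 0"
      using eig[OF _ wg] rayleigh_minimizer_eigenvector[OF lin tan sym wg ww lower] by blast
    moreover have "a \<bullet> a > 0"
      using \<open>a \<noteq> 0\<close> by simp
    ultimately show ?thesis
      using lower[OF \<open>a \<bullet> g = 0\<close>] by (smt (verit) mult_pos_pos)
  qed
  then show ?thesis
    using lin sym by (simp add: pos_def_on_orth_def)
qed

section \<open>Boundaries given by local defining functions\<close>

abbreviation unit_grad :: "(real^'n::finite \<Rightarrow> real) \<Rightarrow> real^'n \<Rightarrow> real^'n" where
  "unit_grad \<rho> y \<equiv> (1 / norm (grad \<rho> y)) *\<^sub>R grad \<rho> y"

lemma unit_grad_derivative:
  fixes \<rho> :: "real^'n::finite \<Rightarrow> real"
  assumes C2: "C2_on S \<rho>" and "x \<in> S" and nonzero: "\<And>y. y \<in> S \<Longrightarrow> grad \<rho> y \<noteq> 0"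
  defines "F \<equiv> frechet_derivative (unit_grad \<rho>) (at x)"
  shows "(unit_grad \<rho> has_derivative F) (at x)"
    and "F v \<bullet> grad \<rho> x = 0"
    and "a \<bullet> grad \<rho> x = 0 \<Longrightarrow> a \<bullet> F b = (a \<bullet> (hessian \<rho> x *v b)) / norm (grad \<rho> x)"
proof -
  have grad: "(grad \<rho> has_derivative (\<lambda>v. hessian \<rho> x *v v)) (at x)"
    by (rule C2_on_has_derivative_grad[OF C2 \<open>x \<in> S\<close>])
  have gx: "grad \<rho> x \<noteq> 0"
    using nonzero[OF \<open>x \<in> S\<close>] .
  have "(\<lambda>y. norm (grad \<rho> y)) differentiable (at x)"
    using differentiable_compose[of norm "grad \<rho>" x UNIV] differentiable_norm_at[OF gx] grad
    by (auto simp: differentiable_def)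
  then have "(\<lambda>y. 1 / norm (grad \<rho> y)) differentiable (at x)"
    using gx by (intro differentiable_divide) auto
  then obtain c' where "((\<lambda>y. 1 / norm (grad \<rho> y)) has_derivative c') (at x)"
    by (auto simp: differentiable_def)
  from has_derivative_scaleR[OF this grad]
  have deriv: "(unit_grad \<rho> has_derivative
      (\<lambda>h. (1 / norm (grad \<rho> x)) *\<^sub>R (hessian \<rho> x *v h) + c' h *\<^sub>R grad \<rho> x)) (at x)" .
  then have F: "F = (\<lambda>h. (1 / norm (grad \<rho> x)) *\<^sub>R (hessian \<rho> x *v h) + c' h *\<^sub>R grad \<rho> x)"
    unfolding F_def by (rule frechet_derivative_at[symmetric])
  show dF: "(unit_grad \<rho> has_derivative F) (at x)"
    unfolding F by (rule deriv)
  have "open S"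
    using C2 by (simp add: C2_on_def C1_on_def)
  have "((\<lambda>y. unit_grad \<rho> y \<bullet> unit_grad \<rho> y) has_derivative (\<lambda>h. 0)) (at x)"
    by (rule has_derivative_transform_within_open[of "\<lambda>y. 1" _ _ UNIV S])
      (use \<open>open S\<close> \<open>x \<in> S\<close> nonzero in \<open>auto simp: dot_square_norm power2_eq_square\<close>)
  from has_derivative_unique[OF has_derivative_inner[OF dF dF] this]
  have "unit_grad \<rho> x \<bullet> F h + F h \<bullet> unit_grad \<rho> x = 0" for h
    by (rule fun_cong)
  then have "unit_grad \<rho> x \<bullet> F h = 0" for h
    by (simp add: inner_commute)
  then show "F v \<bullet> grad \<rho> x = 0"
    using gx by (simp add: inner_commute)
  show "a \<bullet> F b = (a \<bullet> (hessian \<rho> x *v b)) / norm (grad \<rho> x)" if "a \<bullet> grad \<rho> x = 0"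
    using that by (simp add: F inner_add_right)
qed

lemma
  assumes "local_defining \<Omega> p r \<rho>" and "y \<in> ball p r"
  shows local_defining_has_derivative: "(\<rho> has_derivative (\<lambda>v. grad \<rho> y \<bullet> v)) (at y)"
    and local_defining_grad_nonzero: "grad \<rho> y \<noteq> 0"
    and local_defining_mem_iff: "y \<in> \<Omega> \<longleftrightarrow> \<rho> y < 0"
  using assms unfolding local_defining_def C2_on_def C1_on_def by (auto intro: has_derivative_grad)

lemma local_defining_isCont:
  assumes "local_defining \<Omega> p r \<rho>" and "y \<in> ball p r"
  shows "isCont \<rho> y"
  using has_derivative_continuous[OF local_defining_has_derivative[OF assms]] .

lemma local_defining_continuous_on:
  assumes "local_defining \<Omega> p r \<rho>"
  shows "continuous_on (ball p r) \<rho>"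
  using local_defining_isCont[OF assms] by (simp add: continuous_at_imp_continuous_on)

lemma eventually_neg_along_ray:
  fixes f :: "'a::real_normed_vector \<Rightarrow> real"
  assumes "(f has_derivative f') (at y)" and "f y = 0" and "f' w < 0"
  shows "\<forall>\<^sub>F h in at_right 0. f (y + h *\<^sub>R w) < 0"
proof -
  have "((\<lambda>s. f (y + s *\<^sub>R w)) has_real_derivative f' w) (at 0)"
    using has_real_derivative_along_line[of f f' y 0 w] assms(1) by simp
  from DERIV_neg_dec_right[OF this assms(3)] show ?thesis
    using assms(2) by (auto simp: eventually_at_right_field)
qed

lemma eventually_along_ray_in_open:
  fixes y :: "'a::real_normed_vector"
  assumes "open S" and "y \<in> S"
  shows "\<forall>\<^sub>F h in at_right 0. y + h *\<^sub>R w \<in> S"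
proof -
  have "((\<lambda>h. y + h *\<^sub>R w) \<longlongrightarrow> y + 0 *\<^sub>R w) (at_right 0)"
    by (intro tendsto_intros)
  then show ?thesis
    using topological_tendstoD assms by fastforce
qed

lemma local_defining_frontier_iff:
  assumes "open \<Omega>" and ld: "local_defining \<Omega> p r \<rho>" and "y \<in> ball p r"
  shows "y \<in> frontier \<Omega> \<longleftrightarrow> \<rho> y = 0"
proof
  assume "y \<in> frontier \<Omega>"
  then have "y \<in> closure \<Omega>" "y \<notin> \<Omega>"
    using \<open>open \<Omega>\<close> by (auto simp: frontier_def interior_open)
  then obtain z where "\<And>n. z n \<in> \<Omega>" and "z \<longlonglongrightarrow> y"
    using closure_sequential by blast
  then have "\<forall>\<^sub>F n in sequentially. z n \<in> ball p r"
    using topological_tendstoD[of z y sequentially "ball p r"] \<open>y \<in> ball p r\<close> by simp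
  then have "\<forall>\<^sub>F n in sequentially. \<rho> (z n) \<le> 0"
    by eventually_elim (use local_defining_mem_iff[OF ld] \<open>\<And>n. z n \<in> \<Omega>\<close> in \<open>auto intro: less_imp_le\<close>)
  then have "\<rho> y \<le> 0"
    using tendsto_upperbound isCont_tendsto_compose[OF local_defining_isCont[OF ld \<open>y \<in> ball p r\<close>]
        \<open>z \<longlonglongrightarrow> y\<close>] by fastforce
  moreover have "\<rho> y \<ge> 0"
    using \<open>y \<notin> \<Omega>\<close> local_defining_mem_iff[OF ld \<open>y \<in> ball p r\<close>] by simp
  ultimately show "\<rho> y = 0"
    by simp
next
  assume "\<rho> y = 0"
  define w where "w = - grad \<rho> y"
  have "grad \<rho> y \<bullet> w < 0"
    using local_defining_grad_nonzero[OF ld \<open>y \<in> ball p r\<close>] by (simp add: w_def)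
  then have "\<forall>\<^sub>F h in at_right 0. \<rho> (y + h *\<^sub>R w) < 0"
    using eventually_neg_along_ray[OF local_defining_has_derivative[OF ld \<open>y \<in> ball p r\<close>] \<open>\<rho> y = 0\<close>]
    by simp
  moreover have "\<forall>\<^sub>F h in at_right 0. y + h *\<^sub>R w \<in> ball p r"
    using eventually_along_ray_in_open \<open>y \<in> ball p r\<close> by blast
  ultimately have "\<forall>\<^sub>F h in at_right 0. y + h *\<^sub>R w \<in> closure \<Omega>"
    by eventually_elim (use local_defining_mem_iff[OF ld] closure_subset in auto)
  moreover have "((\<lambda>h. y + h *\<^sub>R w) \<longlongrightarrow> y + 0 *\<^sub>R w) (at_right 0)"
    by (intro tendsto_intros)
  ultimately have "y \<in> closure \<Omega>"
    using Lim_in_closed_set[of "closure \<Omega>"] by fastforce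
  moreover have "y \<notin> \<Omega>"
    using local_defining_mem_iff[OF ld \<open>y \<in> ball p r\<close>] \<open>\<rho> y = 0\<close> by simp
  ultimately show "y \<in> frontier \<Omega>"
    using \<open>open \<Omega>\<close> by (simp add: frontier_def interior_open)
qed

lemma unit_vectors_eq_if_halfspace_le:
  fixes g1 g2 :: "'a::real_inner"
  assumes halfspace: "\<And>v. g1 \<bullet> v < 0 \<Longrightarrow> g2 \<bullet> v \<le> 0" and "g1 \<noteq> 0" and "g2 \<noteq> 0"
  shows "(1 / norm g1) *\<^sub>R g1 = (1 / norm g2) *\<^sub>R g2"
proof -
  define \<mu> where "\<mu> = (g2 \<bullet> g1) / (g1 \<bullet> g1)"
  define w where "w = g2 - \<mu> *\<^sub>R g1"
  have "g1 \<bullet> g1 > 0"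
    using \<open>g1 \<noteq> 0\<close> by simp
  then have wg: "w \<bullet> g1 = 0"
    by (simp add: w_def \<mu>_def inner_diff_left)
  have "w = 0"
  proof (rule ccontr)
    assume "w \<noteq> 0"
    then have "w \<bullet> w > 0"
      by simp
    define t where "t = (\<bar>\<mu>\<bar> * (g1 \<bullet> g1) + 1) / (w \<bullet> w)"
    have "g1 \<bullet> (t *\<^sub>R w - g1) < 0"
      using wg \<open>g1 \<bullet> g1 > 0\<close> by (simp add: inner_diff_right inner_commute)
    then have "g2 \<bullet> (t *\<^sub>R w - g1) \<le> 0"
      by (rule halfspace)
    moreover have "g2 \<bullet> (t *\<^sub>R w - g1) = t * (w \<bullet> w) - \<mu> * (g1 \<bullet> g1)"
      using wg by (simp add: w_def inner_diff_left inner_diff_right inner_commute algebra_simps)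
    moreover have "t * (w \<bullet> w) = \<bar>\<mu>\<bar> * (g1 \<bullet> g1) + 1"
      using \<open>w \<bullet> w > 0\<close> by (simp add: t_def)
    ultimately show False
      using \<open>g1 \<bullet> g1 > 0\<close> by (smt (verit) abs_ge_self mult_right_mono)
  qed
  then have g2: "g2 = \<mu> *\<^sub>R g1"
    by (simp add: w_def)
  have "g1 \<bullet> (- g1) < 0"
    using \<open>g1 \<bullet> g1 > 0\<close> by simp
  then have "\<mu> * (g1 \<bullet> g1) \<ge> 0"
    using halfspace by (fastforce simp: g2)
  then have "\<mu> > 0"
    using \<open>g1 \<bullet> g1 > 0\<close> \<open>g2 \<noteq> 0\<close> g2 by (auto simp: zero_le_mult_iff)
  then show ?thesis
    by (simp add: g2)
qed

lemma local_defining_unit_grad_eq: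
  assumes "open \<Omega>" and ld1: "local_defining \<Omega> p1 r1 \<rho>1" and ld2: "local_defining \<Omega> p2 r2 \<rho>2"
    and "q \<in> frontier \<Omega>" and q1: "q \<in> ball p1 r1" and q2: "q \<in> ball p2 r2"
  shows "unit_grad \<rho>1 q = unit_grad \<rho>2 q"
proof (rule unit_vectors_eq_if_halfspace_le)
  fix v
  assume "grad \<rho>1 q \<bullet> v < 0"
  show "grad \<rho>2 q \<bullet> v \<le> 0"
  proof (rule ccontr)
    assume "\<not> grad \<rho>2 q \<bullet> v \<le> 0"
    have zero: "\<rho>1 q = 0" "\<rho>2 q = 0"
      using local_defining_frontier_iff[OF \<open>open \<Omega>\<close> ld1 q1] local_defining_frontier_iff[OF \<open>open \<Omega>\<close> ld2 q2]
        \<open>q \<in> frontier \<Omega>\<close> by simp_all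
    have "\<forall>\<^sub>F h in at_right 0. \<rho>1 (q + h *\<^sub>R v) < 0"
      by (rule eventually_neg_along_ray[OF local_defining_has_derivative[OF ld1 q1]])
        (use zero \<open>grad \<rho>1 q \<bullet> v < 0\<close> in simp_all)
    moreover have "\<forall>\<^sub>F h in at_right 0. - \<rho>2 (q + h *\<^sub>R v) < 0"
      by (rule eventually_neg_along_ray[OF has_derivative_minus[OF local_defining_has_derivative[OF ld2 q2]]])
        (use zero \<open>\<not> grad \<rho>2 q \<bullet> v \<le> 0\<close> in simp_all)
    moreover have "\<forall>\<^sub>F h in at_right 0. q + h *\<^sub>R v \<in> ball p1 r1 \<and> q + h *\<^sub>R v \<in> ball p2 r2"
      using eventually_along_ray_in_open[OF _ q1] eventually_along_ray_in_open[OF _ q2]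
      by (simp add: eventually_conj)
    ultimately have "\<forall>\<^sub>F h in at_right (0::real). False"
      by eventually_elim (use local_defining_mem_iff[OF ld1] local_defining_mem_iff[OF ld2] in force)
    then show False
      by simp
  qed
qed (use local_defining_grad_nonzero[OF ld1 q1] local_defining_grad_nonzero[OF ld2 q2] in auto)

section \<open>Tangent cones of level sets\<close>

definition tangent_cone :: "'a::real_normed_vector set \<Rightarrow> 'a \<Rightarrow> 'a set" where
  "tangent_cone S x = {v. \<forall>\<epsilon>>0. \<forall>\<delta>>0. \<exists>t>0. \<exists>y\<in>S.
     norm (y - x - t *\<^sub>R v) \<le> \<epsilon> * t \<and> norm (y - x) < \<delta>}"

lemma has_derivative_tangent_cone_eq_0:
  fixes h :: "'a::real_normed_vector \<Rightarrow> 'b::real_normed_vector"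
  assumes deriv: "(h has_derivative D) (at x)" and "h x = 0" and zero: "\<And>y. y \<in> S \<Longrightarrow> h y = 0"
    and "v \<in> tangent_cone S x"
  shows "D v = 0"
proof (rule ccontr)
  assume "D v \<noteq> 0"
  define c where "c = norm (D v)"
  have "c > 0"
    using \<open>D v \<noteq> 0\<close> by (simp add: c_def)
  have lin: "bounded_linear D"
    using deriv by (simp add: has_derivative_def)
  obtain K where "K > 0" and K: "\<And>w. norm (D w) \<le> norm w * K"
    using bounded_linear.pos_bounded[OF lin] by blast
  define \<epsilon> where "\<epsilon> = c / (4 * K)"
  have "\<epsilon> > 0"
    using \<open>c > 0\<close> \<open>K > 0\<close> by (simp add: \<epsilon>_def)
  define \<eta> where "\<eta> = c / (4 * (norm v + \<epsilon>))"
  have "norm v + \<epsilon> > 0"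
    using \<open>\<epsilon> > 0\<close> by (simp add: add_nonneg_pos)
  then have "\<eta> > 0"
    using \<open>c > 0\<close> by (simp add: \<eta>_def)
  then obtain d where "d > 0"
    and d: "\<And>y. norm (y - x) < d \<Longrightarrow> norm (h y - h x - D (y - x)) \<le> \<eta> * norm (y - x)"
    using deriv unfolding has_derivative_at_alt by blast
  obtain t y where "t > 0" "y \<in> S" and y: "norm (y - x - t *\<^sub>R v) \<le> \<epsilon> * t" "norm (y - x) < d"
    using \<open>v \<in> tangent_cone S x\<close> \<open>\<epsilon> > 0\<close> \<open>d > 0\<close> unfolding tangent_cone_def by blast
  have "norm (y - x) \<le> norm (y - x - t *\<^sub>R v) + norm (t *\<^sub>R v)"
    by (metis norm_triangle_sub add.commute)
  then have "norm (y - x) \<le> t * (norm v + \<epsilon>)"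
    using y(1) \<open>t > 0\<close> by (simp add: algebra_simps)
  have "norm (D (y - x)) \<le> \<eta> * norm (y - x)"
    using d[OF y(2)] zero[OF \<open>y \<in> S\<close>] \<open>h x = 0\<close> by simp
  also have "\<dots> \<le> \<eta> * (t * (norm v + \<epsilon>))"
    using \<open>norm (y - x) \<le> t * (norm v + \<epsilon>)\<close> \<open>\<eta> > 0\<close> by (simp add: mult_left_mono)
  also have "\<dots> = t * c / 4"
    using \<open>norm v + \<epsilon> > 0\<close> by (simp add: \<eta>_def field_simps)
  finally have 1: "norm (D (y - x)) \<le> t * c / 4" .
  have "norm (D (y - x - t *\<^sub>R v)) \<le> norm (y - x - t *\<^sub>R v) * K"
    by (rule K)
  also have "\<dots> \<le> \<epsilon> * t * K"
    using y(1) \<open>K > 0\<close> by (simp add: mult_right_mono)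
  also have "\<dots> = t * c / 4"
    using \<open>K > 0\<close> by (simp add: \<epsilon>_def field_simps)
  finally have 2: "norm (D (y - x - t *\<^sub>R v)) \<le> t * c / 4" .
  have "t * c = norm (D (y - x) - D (y - x - t *\<^sub>R v))"
    using \<open>t > 0\<close> by (simp add: c_def linear_diff[OF bounded_linear.linear[OF lin]]
        linear_scale[OF bounded_linear.linear[OF lin]])
  also have "\<dots> \<le> t * c / 2"
    using norm_triangle_ineq4[of "D (y - x)" "D (y - x - t *\<^sub>R v)"] 1 2 by simp
  finally show False
    using \<open>t > 0\<close> \<open>c > 0\<close> by simp
qed

text \<open>For small \<open>t > 0\<close> the segment from \<open>x + t(v - s g)\<close> to \<open>x + t(v + s g)\<close> crosses the
  level set, since \<open>\<rho>\<close> has derivative \<open>\<mp>s|g|\<^sup>2\<close> along the rays through its endpoints.\<close>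

lemma level_set_tangent_cone:
  fixes \<rho> :: "'a::real_inner \<Rightarrow> real"
  assumes deriv: "(\<rho> has_derivative (\<lambda>w. g \<bullet> w)) (at x)" and "\<rho> x = 0" and "g \<noteq> 0"
    and cont: "continuous_on (ball x r) \<rho>" and "r > 0" and "v \<bullet> g = 0"
  shows "v \<in> tangent_cone {y \<in> ball x r. \<rho> y = 0} x"
  unfolding tangent_cone_def
proof (intro CollectI allI impI)
  fix \<epsilon> \<delta> :: real
  assume "\<epsilon> > 0" "\<delta> > 0"
  define s where "s = \<epsilon> / (norm g + 1)"
  have "norm g + 1 > 0"
    by (simp add: add_nonneg_pos)
  then have "s > 0" "s * (norm g + 1) = \<epsilon>"
    using \<open>\<epsilon> > 0\<close> by (simp_all add: s_def)
  then have "s * norm g \<le> \<epsilon>"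
    by (simp add: algebra_simps)
  have "s * (g \<bullet> g) > 0"
    using \<open>s > 0\<close> \<open>g \<noteq> 0\<close> by simp
  then have "\<forall>\<^sub>F t in at_right 0. \<rho> (x + t *\<^sub>R (v - s *\<^sub>R g)) < 0"
    and "\<forall>\<^sub>F t in at_right 0. - \<rho> (x + t *\<^sub>R (v + s *\<^sub>R g)) < 0"
    using eventually_neg_along_ray[OF deriv \<open>\<rho> x = 0\<close>, of "v - s *\<^sub>R g"]
      eventually_neg_along_ray[OF has_derivative_minus[OF deriv], of "v + s *\<^sub>R g"]
      \<open>\<rho> x = 0\<close> \<open>v \<bullet> g = 0\<close>
    by (simp_all add: inner_diff_right inner_add_right inner_commute)
  moreover have "((\<lambda>t. t * (norm v + s * norm g)) \<longlongrightarrow> 0 * (norm v + s * norm g)) (at_right 0)"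
    by (intro tendsto_intros)
  then have "\<forall>\<^sub>F t in at_right 0. t * (norm v + s * norm g) < min r \<delta>"
    using order_tendstoD(2)[of _ 0 _ "min r \<delta>"] \<open>r > 0\<close> \<open>\<delta> > 0\<close> by simp
  moreover note eventually_at_right_less
  ultimately have "\<forall>\<^sub>F t in at_right 0. \<rho> (x + t *\<^sub>R (v - s *\<^sub>R g)) < 0 \<and>
      \<rho> (x + t *\<^sub>R (v + s *\<^sub>R g)) > 0 \<and> t * (norm v + s * norm g) < min r \<delta> \<and> t > 0"
    by eventually_elim auto
  then obtain t where neg: "\<rho> (x + t *\<^sub>R (v - s *\<^sub>R g)) < 0" and pos: "\<rho> (x + t *\<^sub>R (v + s *\<^sub>R g)) > 0"
    and small: "t * (norm v + s * norm g) < min r \<delta>" and "t > 0"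
    using eventually_happens'[OF trivial_limit_at_right_real] by blast
  define z where "z \<sigma> = x + t *\<^sub>R v + \<sigma> *\<^sub>R g" for \<sigma>
  have z_near: "norm (z \<sigma> - x) < min r \<delta>" if "\<bar>\<sigma>\<bar> \<le> s * t" for \<sigma>
  proof -
    have "norm (z \<sigma> - x) \<le> t * norm v + \<bar>\<sigma>\<bar> * norm g"
      using norm_triangle_ineq[of "t *\<^sub>R v" "\<sigma> *\<^sub>R g"] \<open>t > 0\<close> by (simp add: z_def)
    also have "\<dots> \<le> t * (norm v + s * norm g)"
      using mult_right_mono[OF that norm_ge_zero[of g]] by (simp add: algebra_simps)
    finally show ?thesis
      using small by linarith
  qed
  have "continuous_on {- (s * t) .. s * t} (\<lambda>\<sigma>. \<rho> (z \<sigma>))"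
  proof (rule continuous_on_compose2[OF cont])
    show "continuous_on {- (s * t) .. s * t} z"
      unfolding z_def by (intro continuous_intros)
    show "z ` {- (s * t) .. s * t} \<subseteq> ball x r"
      using z_near by (auto simp: dist_norm norm_minus_commute abs_le_iff)
  qed
  moreover have "z (- (s * t)) = x + t *\<^sub>R (v - s *\<^sub>R g)" "z (s * t) = x + t *\<^sub>R (v + s *\<^sub>R g)"
    by (simp_all add: z_def algebra_simps)
  ultimately obtain \<sigma> where "\<bar>\<sigma>\<bar> \<le> s * t" "\<rho> (z \<sigma>) = 0"
    using IVT'[of "\<lambda>\<sigma>. \<rho> (z \<sigma>)" "- (s * t)" 0 "s * t"] neg pos \<open>s > 0\<close> \<open>t > 0\<close>
    by (force simp: abs_le_iff)
  moreover have "norm (z \<sigma> - x - t *\<^sub>R v) \<le> \<epsilon> * t" if "\<bar>\<sigma>\<bar> \<le> s * t"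
  proof -
    have "norm (z \<sigma> - x - t *\<^sub>R v) \<le> s * t * norm g"
      using that by (simp add: z_def mult_right_mono)
    also have "\<dots> \<le> \<epsilon> * t"
      using mult_right_mono[OF \<open>s * norm g \<le> \<epsilon>\<close>, of t] \<open>t > 0\<close> by (simp add: algebra_simps)
    finally show ?thesis .
  qed
  ultimately show "\<exists>t>0. \<exists>y\<in>{y \<in> ball x r. \<rho> y = 0}. norm (y - x - t *\<^sub>R v) \<le> \<epsilon> * t \<and> norm (y - x) < \<delta>"
    using \<open>t > 0\<close> z_near by (force simp: dist_norm norm_minus_commute)
qed

lemma frontier_agree_imp_tangential_derivative_eq:
  assumes "open \<Omega>" and ld: "local_defining \<Omega> x r \<rho>" and "x \<in> frontier \<Omega>"
    and f: "(f has_derivative f') (at x)" and g: "(g has_derivative g') (at x)"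
    and agree: "\<And>y. y \<in> frontier \<Omega> \<Longrightarrow> y \<in> ball x r \<Longrightarrow> f y = g y"
    and "v \<bullet> grad \<rho> x = 0"
  shows "f' v = g' v"
proof -
  have "r > 0"
    using ld by (simp add: local_defining_def)
  then have "x \<in> ball x r"
    by simp
  have zero: "f y - g y = 0" if "y \<in> {y \<in> ball x r. \<rho> y = 0}" for y
    using that agree local_defining_frontier_iff[OF \<open>open \<Omega>\<close> ld] by auto
  have "\<rho> x = 0"
    using local_defining_frontier_iff[OF \<open>open \<Omega>\<close> ld \<open>x \<in> ball x r\<close>] \<open>x \<in> frontier \<Omega>\<close> by simp
  from level_set_tangent_cone[OF local_defining_has_derivative[OF ld \<open>x \<in> ball x r\<close>] this
      local_defining_grad_nonzero[OF ld \<open>x \<in> ball x r\<close>] local_defining_continuous_on[OF ld] \<open>r > 0\<close>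
      \<open>v \<bullet> grad \<rho> x = 0\<close>]
  have "v \<in> tangent_cone {y \<in> ball x r. \<rho> y = 0} x" .
  from has_derivative_tangent_cone_eq_0[OF has_derivative_diff[OF f g] zero[of x] zero this]
  show ?thesis
    using \<open>x \<in> ball x r\<close> \<open>x \<in> frontier \<Omega>\<close> local_defining_frontier_iff[OF \<open>open \<Omega>\<close> ld] by simp
qed

lemma outward_unit_normal_eq_unit_grad:
  assumes "open \<Omega>" and "outward_unit_normal \<Omega> \<nu>" and ld: "local_defining \<Omega> p r \<rho>"
    and "q \<in> frontier \<Omega>" and "q \<in> ball p r"
  shows "\<nu> q = unit_grad \<rho> q"
proof -
  obtain rq \<rho>q where ldq: "local_defining \<Omega> q rq \<rho>q" and "\<nu> q = unit_grad \<rho>q q"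
    using assms(2,4) unfolding outward_unit_normal_def by blast
  moreover have "q \<in> ball q rq"
    using ldq by (simp add: local_defining_def)
  ultimately show ?thesis
    using local_defining_unit_grad_eq[OF \<open>open \<Omega>\<close> ldq ld \<open>q \<in> frontier \<Omega>\<close>] \<open>q \<in> ball p r\<close> by simp
qed

lemma strictly_convex_normal_derivative_pos_def:
  assumes "open \<Omega>" and "strictly_convex_C2 \<Omega>" and "outward_unit_normal \<Omega> \<nu>"
    and "normal_extension \<Omega> \<nu> U N" and "x \<in> frontier \<Omega>"
  shows "pos_def_on_orth (frechet_derivative N (at x)) (\<nu> x)"
proof -
  obtain r \<rho> where ld: "local_defining \<Omega> x r \<rho>"
    and eig: "\<And>v \<kappa>. v \<noteq> 0 \<Longrightarrow> v \<bullet> grad \<rho> x = 0 \<Longrightarrow>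
      frechet_derivative (unit_grad \<rho>) (at x) v = \<kappa> *\<^sub>R v \<Longrightarrow> \<kappa> > 0"
    using assms(2,5) unfolding strictly_convex_C2_def by blast
  define g F A where "g = grad \<rho> x" and "F = frechet_derivative (unit_grad \<rho>) (at x)"
    and "A = frechet_derivative N (at x)"
  have "r > 0" and C2: "C2_on (ball x r) \<rho>"
    using ld by (simp_all add: local_defining_def)
  then have "x \<in> ball x r"
    by simp
  note F_props = unit_grad_derivative[OF C2 \<open>x \<in> ball x r\<close> local_defining_grad_nonzero[OF ld],
      folded F_def g_def]
  have "pos_def_on_orth F g"
  proof (rule pos_def_on_orth_if_eigenvalues_pos)
    show "linear F"
      using F_props(1) by (rule has_derivative_linear)
    show "a \<bullet> F b = b \<bullet> F a" if "a \<bullet> g = 0" "b \<bullet> g = 0" for a b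
      using that F_props(3) hessian_symmetric[OF C2 \<open>r > 0\<close>, of a b] by simp
  qed (use F_props(2) eig in \<open>auto simp: F_def g_def\<close>)
  have "x \<in> U" and "C1_on U N"
    using assms(4,5) unfolding normal_extension_def by auto
  then have N: "(N has_derivative A) (at x)"
    unfolding A_def C1_on_def using frechet_derivative_works by blast
  have agree: "N y = unit_grad \<rho> y" if "y \<in> frontier \<Omega>" "y \<in> ball x r" for y
    using assms(4) outward_unit_normal_eq_unit_grad[OF \<open>open \<Omega>\<close> assms(3) ld that]
    unfolding normal_extension_def by (simp add: that(1))
  have "A v = F v" if "v \<bullet> g = 0" for v
    using frontier_agree_imp_tangential_derivative_eq[OF \<open>open \<Omega>\<close> ld \<open>x \<in> frontier \<Omega>\<close> N F_props(1)
        agree] that by (simp add: g_def)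
  moreover have "\<nu> x = (1 / norm g) *\<^sub>R g" and "g \<noteq> 0"
    using outward_unit_normal_eq_unit_grad[OF \<open>open \<Omega>\<close> assms(3) ld \<open>x \<in> frontier \<Omega>\<close> \<open>x \<in> ball x r\<close>]
      local_defining_grad_nonzero[OF ld \<open>x \<in> ball x r\<close>] by (simp_all add: g_def)
  then have "a \<bullet> \<nu> x = 0 \<longleftrightarrow> a \<bullet> g = 0" for a
    by simp
  ultimately show ?thesis
    using \<open>pos_def_on_orth F g\<close> has_derivative_linear[OF N]
    unfolding A_def[symmetric] pos_def_on_orth_def by metis
qed

theorem mainTheorem9:
  fixes Br :: "'n::finite \<Rightarrow> real^'f::finite^'e::finite"
    and Bc :: "'n::finite \<Rightarrow> complex^'g::finite^'h::finite"
  shows "(\<not> cocanceling Br \<longrightarrow>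
            (\<forall>(\<Omega>::(real^'n) set) \<nu> U N. bounded_C2_domain \<Omega> \<and> outward_unit_normal \<Omega> \<nu> \<and>
               normal_extension \<Omega> \<nu> U N \<longrightarrow> \<not> strongly_pseudoconvex (\<lambda>x. x) Br \<Omega> \<nu> N))
       \<and> (cocanceling Br \<and> \<not> elliptic Br \<longrightarrow>
            (\<forall>(\<Omega>::(real^'n) set) \<nu> U N. bounded_C2_domain \<Omega> \<and> strictly_convex_C2 \<Omega> \<and>
               outward_unit_normal \<Omega> \<nu> \<and> normal_extension \<Omega> \<nu> U N \<longrightarrow>
               strongly_pseudoconvex (\<lambda>x. x) Br \<Omega> \<nu> N))
       \<and> (\<not> cocanceling Bc \<longrightarrow>
            (\<forall>(\<Omega>::(real^'n) set) \<nu> U N. bounded_C2_domain \<Omega> \<and> outward_unit_normal \<Omega> \<nu> \<and>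
               normal_extension \<Omega> \<nu> U N \<longrightarrow> \<not> strongly_pseudoconvex cnj Bc \<Omega> \<nu> N))
       \<and> (cocanceling Bc \<and> \<not> elliptic Bc \<longrightarrow>
            (\<forall>(\<Omega>::(real^'n) set) \<nu> U N. bounded_C2_domain \<Omega> \<and> strictly_convex_C2 \<Omega> \<and>
               outward_unit_normal \<Omega> \<nu> \<and> normal_extension \<Omega> \<nu> U N \<longrightarrow>
               strongly_pseudoconvex cnj Bc \<Omega> \<nu> N))"
proof -
  have pos_def: "pos_def_on_orth (frechet_derivative N (at x)) (\<nu> x)"
    if "bounded_C2_domain \<Omega>" "strictly_convex_C2 \<Omega>" "outward_unit_normal \<Omega> \<nu>"
      "normal_extension \<Omega> \<nu> U N" "x \<in> frontier \<Omega>" for \<Omega> :: "(real^'n) set" and \<nu> U N x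
    using that by (intro strictly_convex_normal_derivative_pos_def) (auto simp: bounded_C2_domain_def)
  show ?thesis
  proof (intro conjI impI allI; elim conjE)
    fix \<Omega> :: "(real^'n) set" and \<nu> U N
    assume "bounded_C2_domain \<Omega>" "strictly_convex_C2 \<Omega>" "outward_unit_normal \<Omega> \<nu>"
      "normal_extension \<Omega> \<nu> U N"
    note pos_def[OF this]
    then show "cocanceling Br \<Longrightarrow> strongly_pseudoconvex (\<lambda>x. x) Br \<Omega> \<nu> N"
      and "cocanceling Bc \<Longrightarrow> strongly_pseudoconvex cnj Bc \<Omega> \<nu> N"
      by (simp_all add: strongly_pseudoconvex_real strongly_pseudoconvex_complex)
  qed (simp_all add: not_strongly_pseudoconvex_if_not_cocanceling)
qed

end
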